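(* Let $\gamma>0$, $s>0$, $D_2=\partial/\partial v$, and $G(u,v;s)=(u^2+v^2)^{-s}$ for $(u,v)\in\mathbb{R}^2\setminus\{(0,0)\}$. If $u\ge\gamma$ and $v\in\mathbb{R}$, then $$\frac{|D_2G(u,v;s)|}{G(u,v;s)}\le\frac{s}{\gamma},\qquad -\frac{2s}{\gamma^2}\le\frac{D_2^2G(u,v;s)}{G(u,v;s)}\le\frac{2s(2s+1)}{4\gamma^2},$$ $$\frac{|D_2^3G(u,v;s)|}{G(u,v;s)}\le\frac{2s(2s+2)}{\gamma^3}\max\Big\{\frac{25\sqrt5}{72},\frac{2s+1}{8}\Big\},$$ $$-\frac{2s(s+1)(2s+2)\cdot3}{\gamma^4}\le\frac{D_2^4G(u,v;s)}{G(u,v;s)}\le\frac{2s(2s+1)(2s+2)(2s+3)}{\gamma^4}.$$ *)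

theory Defs
  imports "HOL-Analysis.Analysis"
begin

definition G :: "real \<Rightarrow> real \<Rightarrow> real \<Rightarrow> real" where
  "G u v s = (u\<^sup>2 + v\<^sup>2) powr (-s)"

definition D2 :: "nat \<Rightarrow> real \<Rightarrow> real \<Rightarrow> real \<Rightarrow> real" where
  "D2 k u v s = (deriv ^^ k) (\<lambda>w. G u w s) v"

end

theory Submission
  imports Defs
begin

text \<open>
  Differentiating the powers \<open>(u\<^sup>2 + v\<^sup>2) powr (- s - j)\<close> term by term shows that
  \<open>D2 k u v s / G u v s\<close> is a rational function of \<open>v\<close> with denominator \<open>(u\<^sup>2 + v\<^sup>2)\<^sup>k\<close>.
  Each bound is first proved with \<open>\<gamma> = u\<close>: after clearing denominators it becomes a
  polynomial inequality in \<open>u\<^sup>2\<close> and \<open>v\<^sup>2\<close>, witnessed by writing the difference as a sum of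
  nonnegative terms (for the third derivative, after splitting on the sign of the numerator,
  one branch uses the weighted AM-GM inequality behind the constant \<open>25 * sqrt 5 / 72\<close>).
  Replacing \<open>u\<close> by any \<open>\<gamma> \<le> u\<close> only weakens bounds of the form \<open>\<plusminus>c / u\<^sup>k\<close>.
\<close>

lemma deriv_G_iterates:
  fixes u s :: real
  assumes "u \<noteq> 0"
  defines "Q \<equiv> \<lambda>w. u\<^sup>2 + w\<^sup>2"
  shows "deriv (\<lambda>w. G u w s) = (\<lambda>w. - 2 * s * w * Q w powr (- s - 1))"
    and "deriv (\<lambda>w. - 2 * s * w * Q w powr (- s - 1))
           = (\<lambda>w. - 2 * s * Q w powr (- s - 1) + 4 * s * (s + 1) * w\<^sup>2 * Q w powr (- s - 2))"
    and "deriv (\<lambda>w. - 2 * s * Q w powr (- s - 1) + 4 * s * (s + 1) * w\<^sup>2 * Q w powr (- s - 2))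
           = (\<lambda>w. 12 * s * (s + 1) * w * Q w powr (- s - 2)
                 - 8 * s * (s + 1) * (s + 2) * w ^ 3 * Q w powr (- s - 3))"
    and "deriv (\<lambda>w. 12 * s * (s + 1) * w * Q w powr (- s - 2)
                 - 8 * s * (s + 1) * (s + 2) * w ^ 3 * Q w powr (- s - 3))
           = (\<lambda>w. 12 * s * (s + 1) * Q w powr (- s - 2)
                 - 48 * s * (s + 1) * (s + 2) * w\<^sup>2 * Q w powr (- s - 3)
                 + 16 * s * (s + 1) * (s + 2) * (s + 3) * w ^ 4 * Q w powr (- s - 4))"
  unfolding G_def Q_def using assms
  by (safe intro!: ext DERIV_imp_deriv)
    (auto intro!: derivative_eq_intros
      simp: sum_squares_gt_zero_iff algebra_simps power2_eq_square power3_eq_cube eval_nat_numeral)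

lemma D2_div_G:
  fixes u v s :: real
  assumes "u \<noteq> 0"
  defines "Q \<equiv> u\<^sup>2 + v\<^sup>2"
  shows "D2 1 u v s / G u v s = - 2 * s * v / Q"
    and "D2 2 u v s / G u v s = 2 * s * (2 * (s + 1) * v\<^sup>2 - Q) / Q\<^sup>2"
    and "D2 3 u v s / G u v s = 4 * s * (s + 1) * v * (3 * Q - 2 * (s + 2) * v\<^sup>2) / Q ^ 3"
    and "D2 4 u v s / G u v s
           = 4 * s * (s + 1) * (3 * Q\<^sup>2 - 12 * (s + 2) * v\<^sup>2 * Q + 4 * (s + 2) * (s + 3) * v ^ 4) / Q ^ 4"
proof -
  have Q: "0 < Q" using assms by (simp add: Q_def add_pos_nonneg)
  have G: "G u v s = Q powr (- s)" by (simp add: G_def Q_def)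
  have "D2 1 u v s = deriv (\<lambda>w. G u w s) v"
    and "D2 2 u v s = deriv (deriv (\<lambda>w. G u w s)) v"
    and "D2 3 u v s = deriv (deriv (deriv (\<lambda>w. G u w s))) v"
    and "D2 4 u v s = deriv (deriv (deriv (deriv (\<lambda>w. G u w s)))) v"
    by (simp_all add: D2_def numeral_eq_Suc)
  note D2 = this[unfolded deriv_G_iterates[OF assms(1)], folded Q_def]
  note powr = powr_diff powr_numeral[OF less_imp_le[OF Q]] powr_one[OF less_imp_le[OF Q]]
  show "D2 1 u v s / G u v s = - 2 * s * v / Q"
    using Q unfolding D2 G by (simp add: powr)
  show "D2 2 u v s / G u v s = 2 * s * (2 * (s + 1) * v\<^sup>2 - Q) / Q\<^sup>2"
    using Q unfolding D2 G by (simp add: powr field_simps eval_nat_numeral)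
  show "D2 3 u v s / G u v s = 4 * s * (s + 1) * v * (3 * Q - 2 * (s + 2) * v\<^sup>2) / Q ^ 3"
    using Q unfolding D2 G by (simp add: powr field_simps eval_nat_numeral)
  show "D2 4 u v s / G u v s
           = 4 * s * (s + 1) * (3 * Q\<^sup>2 - 12 * (s + 2) * v\<^sup>2 * Q + 4 * (s + 2) * (s + 3) * v ^ 4) / Q ^ 4"
    using Q unfolding D2 G by (simp add: powr field_simps eval_nat_numeral)
qed

lemma G_pos: "u \<noteq> 0 \<Longrightarrow> 0 < G u v s"
  by (simp add: G_def add_pos_nonneg)

lemma divide_le_divide_cross:
  fixes a b c d :: real
  assumes "0 < b" "0 < d" "a * d \<le> c * b"
  shows "a / b \<le> c / d"
  using assms by (simp add: field_simps)

lemma divide_power_le_divide_power: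
  fixes a b c :: real
  assumes "0 \<le> c" "0 < a" "a \<le> b"
  shows "c / b ^ n \<le> c / a ^ n"
  using assms by (intro divide_left_mono power_mono) auto

lemma D2_1_div_G_abs_le:
  fixes u v s :: real
  assumes "0 < u" "0 < s"
  shows "\<bar>D2 1 u v s\<bar> / G u v s \<le> s / u"
proof -
  define Q where "Q = u\<^sup>2 + v\<^sup>2"
  have Q: "0 < Q" using assms by (simp add: Q_def add_pos_nonneg)
  have "\<bar>D2 1 u v s\<bar> / G u v s = \<bar>D2 1 u v s / G u v s\<bar>"
    using G_pos[of u v s] assms by (simp add: abs_divide)
  also have "\<dots> = 2 * s * \<bar>v\<bar> / Q"
    using D2_div_G(1)[of u v s] assms Q by (simp add: Q_def abs_divide abs_mult)
  also have "\<dots> \<le> s / u"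
  proof (rule divide_le_divide_cross[OF Q \<open>0 < u\<close>])
    have "2 * \<bar>v\<bar> * u \<le> Q" using sum_squares_bound[of "\<bar>v\<bar>" u] by (simp add: Q_def)
    then show "2 * s * \<bar>v\<bar> * u \<le> s * Q"
      using mult_left_mono[of _ _ s] assms by (simp add: mult.assoc)
  qed
  finally show ?thesis .
qed

lemma D2_2_div_G_bounds:
  fixes u v s :: real
  assumes "0 < u" "0 < s"
  shows "- (2 * s) / u\<^sup>2 \<le> D2 2 u v s / G u v s"
    and "D2 2 u v s / G u v s \<le> 2 * s * (2 * s + 1) / (4 * u\<^sup>2)"
proof -
  define Q where "Q = u\<^sup>2 + v\<^sup>2"
  have Q: "0 < Q" using assms by (simp add: Q_def add_pos_nonneg)
  have ratio: "D2 2 u v s / G u v s = 2 * s * (2 * (s + 1) * v\<^sup>2 - Q) / Q\<^sup>2"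
    using D2_div_G(2)[of u v s] assms by (simp add: Q_def)
  have "- (2 * s) / u\<^sup>2 \<le> - (2 * s) / Q"
    using assms Q by (simp add: Q_def divide_left_mono)
  also have "\<dots> = 2 * s * (- Q) / Q\<^sup>2"
    using Q by (simp add: power2_eq_square)
  also have "\<dots> \<le> 2 * s * (2 * (s + 1) * v\<^sup>2 - Q) / Q\<^sup>2"
    using assms by (intro divide_right_mono mult_left_mono) auto
  finally show "- (2 * s) / u\<^sup>2 \<le> D2 2 u v s / G u v s"
    unfolding ratio .
  have "2 * s * (2 * s + 1) * Q\<^sup>2 - 2 * s * (2 * (s + 1) * v\<^sup>2 - Q) * (4 * u\<^sup>2)
          = 2 * s * ((2 * s + 1) * (u\<^sup>2 - v\<^sup>2)\<^sup>2 + 4 * u\<^sup>2 * u\<^sup>2)"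
    unfolding Q_def by algebra
  also have "\<dots> \<ge> 0"
    using assms by simp
  finally have "2 * s * (2 * (s + 1) * v\<^sup>2 - Q) * (4 * u\<^sup>2) \<le> 2 * s * (2 * s + 1) * Q\<^sup>2"
    by simp
  then show "D2 2 u v s / G u v s \<le> 2 * s * (2 * s + 1) / (4 * u\<^sup>2)"
    unfolding ratio using assms Q by (intro divide_le_divide_cross) auto
qed

lemma weighted_am_gm_one_five:
  fixes x y :: real
  assumes "0 \<le> x" "0 \<le> y"
  shows "46656 * x * y ^ 5 \<le> 3125 * (x + y) ^ 6"
proof -
  have "3125 * (x + y) ^ 6 - 46656 * x * y ^ 5
          = (5 * x - y)\<^sup>2 * (125 * x ^ 4 + 800 * x ^ 3 * y + 2190 * x\<^sup>2 * y\<^sup>2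
                              + 3344 * x * y ^ 3 + 3125 * y ^ 4)"
    by algebra
  also have "\<dots> \<ge> 0"
    using assms by simp
  finally show ?thesis by simp
qed

(* Sharp: equality holds when u\<^sup>2 = 5 * v\<^sup>2. *)
lemma abs_mult_power_five_le:
  fixes u v :: real
  assumes "0 \<le> u"
  shows "3 * \<bar>v\<bar> * u ^ 5 \<le> 25 * sqrt 5 / 72 * (u\<^sup>2 + v\<^sup>2) ^ 3"
proof (rule power2_le_imp_le)
  have "(3 * \<bar>v\<bar> * u ^ 5)\<^sup>2 = 9 * v\<^sup>2 * (u\<^sup>2) ^ 5"
    by (simp add: power2_eq_square algebra_simps eval_nat_numeral)
  also have "\<dots> \<le> 3125 / 5184 * ((u\<^sup>2 + v\<^sup>2) ^ 3)\<^sup>2"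
    using weighted_am_gm_one_five[of "v\<^sup>2" "u\<^sup>2"] by (simp add: add.commute flip: power_mult)
  also have "\<dots> = (25 * sqrt 5 / 72 * (u\<^sup>2 + v\<^sup>2) ^ 3)\<^sup>2"
    by (simp add: power_mult_distrib power_divide)
  finally show "(3 * \<bar>v\<bar> * u ^ 5)\<^sup>2 \<le> (25 * sqrt 5 / 72 * (u\<^sup>2 + v\<^sup>2) ^ 3)\<^sup>2" .
qed simp

lemma D2_3_numerator_bound:
  fixes u v s Q :: real
  assumes "0 \<le> u" "0 \<le> s" and Q: "Q = u\<^sup>2 + v\<^sup>2"
  shows "\<bar>v * (3 * Q - 2 * (s + 2) * v\<^sup>2)\<bar> * u ^ 3 \<le> max (25 * sqrt 5 / 72) ((2 * s + 1) / 8) * Q ^ 3"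
proof (cases "2 * (s + 2) * v\<^sup>2 \<le> 3 * Q")
  case True
  have "3 * Q - 2 * (s + 2) * v\<^sup>2 \<le> 3 * u\<^sup>2"
    using assms mult_right_mono[of 3 "2 * (s + 2)" "v\<^sup>2"] by simp
  then have "\<bar>v * (3 * Q - 2 * (s + 2) * v\<^sup>2)\<bar> * u ^ 3 \<le> \<bar>v\<bar> * (3 * u\<^sup>2) * u ^ 3"
    using True assms by (simp add: abs_mult mult_left_mono mult_right_mono)
  also have "\<dots> = 3 * \<bar>v\<bar> * u ^ 5"
    by (simp add: algebra_simps eval_nat_numeral)
  also have "\<dots> \<le> 25 * sqrt 5 / 72 * Q ^ 3"
    using abs_mult_power_five_le[OF assms(1)] Q by simp
  also have "\<dots> \<le> max (25 * sqrt 5 / 72) ((2 * s + 1) / 8) * Q ^ 3"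
    using Q by (intro mult_right_mono) auto
  finally show ?thesis .
next
  case False
  define X where "X = 2 * (s + 2) * v\<^sup>2 - 3 * Q"
  have X: "0 \<le> X" using False by (simp add: X_def)
  have "\<bar>v * (3 * Q - 2 * (s + 2) * v\<^sup>2)\<bar> = \<bar>v\<bar> * X"
    using X by (simp add: X_def abs_mult abs_minus_commute)
  then have "\<bar>v * (3 * Q - 2 * (s + 2) * v\<^sup>2)\<bar> * u ^ 3 = (\<bar>v\<bar> * u) * (X * u\<^sup>2)"
    by (simp add: algebra_simps eval_nat_numeral)
  also have "\<dots> \<le> (Q / 2) * ((2 * s + 1) * Q\<^sup>2 / 4)"
  proof (rule mult_mono)
    show "\<bar>v\<bar> * u \<le> Q / 2"
      using sum_squares_bound[of "\<bar>v\<bar>" u] Q by simp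
    have "(2 * s + 1) * Q\<^sup>2 - 4 * X * u\<^sup>2 = (2 * s + 1) * (u\<^sup>2 - v\<^sup>2)\<^sup>2 + 12 * u\<^sup>2 * u\<^sup>2"
      unfolding X_def Q by algebra
    also have "\<dots> \<ge> 0"
      using assms by simp
    finally show "X * u\<^sup>2 \<le> (2 * s + 1) * Q\<^sup>2 / 4"
      by simp
  qed (use X Q in auto)
  also have "\<dots> = (2 * s + 1) / 8 * Q ^ 3"
    by (simp add: eval_nat_numeral)
  also have "\<dots> \<le> max (25 * sqrt 5 / 72) ((2 * s + 1) / 8) * Q ^ 3"
    using Q by (intro mult_right_mono) auto
  finally show ?thesis .
qed

lemma D2_3_div_G_abs_le:
  fixes u v s :: real
  assumes "0 < u" "0 < s"
  shows "\<bar>D2 3 u v s\<bar> / G u v s \<le> 2 * s * (2 * s + 2) / u ^ 3 * max (25 * sqrt 5 / 72) ((2 * s + 1) / 8)"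
proof -
  define Q where "Q = u\<^sup>2 + v\<^sup>2"
  define M where "M = max (25 * sqrt 5 / 72) ((2 * s + 1) / 8)"
  have Q: "0 < Q" using assms by (simp add: Q_def add_pos_nonneg)
  have "\<bar>D2 3 u v s\<bar> / G u v s = \<bar>D2 3 u v s / G u v s\<bar>"
    using G_pos[of u v s] assms by (simp add: abs_divide)
  also have "\<dots> = 4 * s * (s + 1) * \<bar>v * (3 * Q - 2 * (s + 2) * v\<^sup>2)\<bar> / Q ^ 3"
    using D2_div_G(3)[of u v s] assms Q by (simp add: Q_def abs_divide abs_mult)
  also have "\<dots> \<le> 4 * s * (s + 1) * M / u ^ 3"
  proof (rule divide_le_divide_cross)
    have "\<bar>v * (3 * Q - 2 * (s + 2) * v\<^sup>2)\<bar> * u ^ 3 \<le> M * Q ^ 3"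
      unfolding M_def using assms by (intro D2_3_numerator_bound) (auto simp: Q_def)
    then show "4 * s * (s + 1) * \<bar>v * (3 * Q - 2 * (s + 2) * v\<^sup>2)\<bar> * u ^ 3 \<le> 4 * s * (s + 1) * M * Q ^ 3"
      using assms mult_left_mono[of _ _ "4 * s * (s + 1)"] by (simp add: mult.assoc)
  qed (use assms Q in auto)
  also have "\<dots> = 2 * s * (2 * s + 2) / u ^ 3 * M"
    by (simp add: algebra_simps)
  finally show ?thesis unfolding M_def .
qed

lemma D2_4_numerator_bounds:
  fixes u v s Q :: real
  assumes "0 \<le> s" and Q: "Q = u\<^sup>2 + v\<^sup>2"
  defines "N \<equiv> 3 * Q\<^sup>2 - 12 * (s + 2) * v\<^sup>2 * Q + 4 * (s + 2) * (s + 3) * v ^ 4"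
  shows "- (3 * (s + 1) * Q\<^sup>2) \<le> N"
    and "N \<le> (2 * s + 1) * (2 * s + 3) * Q\<^sup>2"
proof -
  have "(s + 3) * (N + 3 * (s + 1) * Q\<^sup>2) = (s + 2) * ((3 * Q - 2 * (s + 3) * v\<^sup>2)\<^sup>2 + 3 * s * Q\<^sup>2)"
    unfolding N_def by algebra
  also have "\<dots> \<ge> 0"
    using assms by simp
  finally have "0 \<le> (s + 3) * (N + 3 * (s + 1) * Q\<^sup>2)" .
  then show "- (3 * (s + 1) * Q\<^sup>2) \<le> N"
    using assms by (simp add: zero_le_mult_iff)
  have "(2 * s + 1) * (2 * s + 3) * Q\<^sup>2 - N = 4 * (s + 2) * (s + 3) * u\<^sup>2 * v\<^sup>2 + 4 * s * (s + 2) * u\<^sup>2 * Q"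
    unfolding N_def Q by algebra
  also have "\<dots> \<ge> 0"
    using assms by simp
  finally show "N \<le> (2 * s + 1) * (2 * s + 3) * Q\<^sup>2"
    by simp
qed

lemma D2_4_div_G_bounds:
  fixes u v s :: real
  assumes "0 < u" "0 < s"
  shows "- (2 * s * (s + 1) * (2 * s + 2) * 3) / u ^ 4 \<le> D2 4 u v s / G u v s"
    and "D2 4 u v s / G u v s \<le> 2 * s * (2 * s + 1) * (2 * s + 2) * (2 * s + 3) / u ^ 4"
proof -
  define Q where "Q = u\<^sup>2 + v\<^sup>2"
  define N where "N = 3 * Q\<^sup>2 - 12 * (s + 2) * v\<^sup>2 * Q + 4 * (s + 2) * (s + 3) * v ^ 4"
  have Q: "0 < Q" using assms by (simp add: Q_def add_pos_nonneg)
  have "(u\<^sup>2)\<^sup>2 \<le> Q\<^sup>2"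
    by (rule power_mono) (auto simp: Q_def)
  then have u4: "u ^ 4 \<le> Q\<^sup>2"
    by (simp flip: power_mult)
  have ratio: "D2 4 u v s / G u v s = 4 * s * (s + 1) * N / Q ^ 4"
    using D2_div_G(4)[of u v s] assms by (simp add: Q_def N_def)
  note N_bounds = D2_4_numerator_bounds[OF less_imp_le[OF assms(2)] Q_def, folded N_def]
  have "- (2 * s * (s + 1) * (2 * s + 2) * 3) / u ^ 4 = - (12 * s * (s + 1)\<^sup>2 / u ^ 4)"
    by (simp add: power2_eq_square algebra_simps flip: divide_minus_left)
  also have "\<dots> \<le> - (12 * s * (s + 1)\<^sup>2 / Q\<^sup>2)"
    using divide_left_mono[OF u4, of "12 * s * (s + 1)\<^sup>2"] assms Q by simp
  also have "\<dots> = 4 * s * (s + 1) * (- (3 * (s + 1) * Q\<^sup>2)) / Q ^ 4"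
    using Q by (simp add: power2_eq_square eval_nat_numeral field_simps)
  also have "\<dots> \<le> 4 * s * (s + 1) * N / Q ^ 4"
    using N_bounds(1) assms by (intro divide_right_mono mult_left_mono) auto
  finally show "- (2 * s * (s + 1) * (2 * s + 2) * 3) / u ^ 4 \<le> D2 4 u v s / G u v s"
    unfolding ratio .
  have "4 * s * (s + 1) * N / Q ^ 4 \<le> 4 * s * (s + 1) * ((2 * s + 1) * (2 * s + 3) * Q\<^sup>2) / Q ^ 4"
    using N_bounds(2) assms by (intro divide_right_mono mult_left_mono) auto
  also have "\<dots> = 4 * s * (s + 1) * (2 * s + 1) * (2 * s + 3) / Q\<^sup>2"
    using Q by (simp add: power2_eq_square eval_nat_numeral)
  also have "\<dots> \<le> 4 * s * (s + 1) * (2 * s + 1) * (2 * s + 3) / u ^ 4"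
    using assms Q by (intro divide_left_mono u4) auto
  also have "\<dots> = 2 * s * (2 * s + 1) * (2 * s + 2) * (2 * s + 3) / u ^ 4"
    by (simp add: algebra_simps)
  finally show "D2 4 u v s / G u v s \<le> 2 * s * (2 * s + 1) * (2 * s + 2) * (2 * s + 3) / u ^ 4"
    unfolding ratio .
qed

theorem lemma5p7:
  fixes \<gamma> s u v :: real
  assumes "\<gamma> > 0" and "s > 0" and "u \<ge> \<gamma>"
  shows "(\<bar>D2 1 u v s\<bar> / G u v s \<le> s / \<gamma>) \<and>
      (- (2 * s) / \<gamma>\<^sup>2 \<le> D2 2 u v s / G u v s) \<and>
      (D2 2 u v s / G u v s \<le> 2 * s * (2 * s + 1) / (4 * \<gamma>\<^sup>2)) \<and>
      (\<bar>D2 3 u v s\<bar> / G u v s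
           \<le> 2 * s * (2 * s + 2) / \<gamma> ^ 3 * max (25 * sqrt 5 / 72) ((2 * s + 1) / 8)) \<and>
      (- (2 * s * (s + 1) * (2 * s + 2) * 3) / \<gamma> ^ 4 \<le> D2 4 u v s / G u v s) \<and>
      (D2 4 u v s / G u v s \<le> 2 * s * (2 * s + 1) * (2 * s + 2) * (2 * s + 3) / \<gamma> ^ 4)"
proof -
  have u: "0 < u" using assms by linarith
  have weaken: "c / u ^ n \<le> c / \<gamma> ^ n" if "0 \<le> c" for c :: real and n
    using divide_power_le_divide_power[OF that assms(1,3)] .
  have M: "0 \<le> max (25 * sqrt 5 / 72) ((2 * s + 1) / 8)" by (simp add: le_max_iff_disj)
  show ?thesis
    using D2_1_div_G_abs_le[OF u assms(2), of v] weaken[of s 1]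
      D2_2_div_G_bounds[OF u assms(2), of v] weaken[of "2 * s" 2] weaken[of "2 * s * (2 * s + 1) / 4" 2]
      D2_3_div_G_abs_le[OF u assms(2), of v] mult_right_mono[OF weaken[of "2 * s * (2 * s + 2)" 3] M]
      D2_4_div_G_bounds[OF u assms(2), of v] weaken[of "2 * s * (s + 1) * (2 * s + 2) * 3" 4]
      weaken[of "2 * s * (2 * s + 1) * (2 * s + 2) * (2 * s + 3)" 4] assms(2)
    by auto
qed

end
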